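(* Let $f$ be a bounded analytic function in $\mathbb{C}_0$ and suppose there are constants $\gamma>0$ and $c>0$ such that $|f(\gamma+i \tau)| \geq c$ for every $\tau\in\mathbb{R}$. Then for every $\tau\in\mathbb{R}$, \[\sum_{\substack{s \in \mathscr{Z}_f \\ \tau \leq \mathrm{Im}\, s \leq \tau+1 \\ 0 < \mathrm{Re}\, s < \gamma}} \mathrm{Re}\, s \leq \frac{4\gamma^2+1}{2\gamma} \log{\frac{\|f\|_\infty}{c}}\] and \[\int_\tau^{\tau+1} \big|\log|f(it)|\big|\,dt \leq \big|\log{\|f\|_\infty}\big| + \frac{\pi}{2} \frac{4\gamma^2+1}{2\gamma} \log{\frac{\|f\|_\infty}{c}},\] where $f(it)$ denotes the a.e.-defined nontangential boundary values of $f$.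
   Context: $\mathbb{C}_0=\{s:\mathrm{Re}\,s>0\}$, $\|f\|_\infty=\sup_{s\in\mathbb{C}_0}|f(s)|$, and $\mathscr{Z}_f$ is the zero sequence of $f$, zeros repeated according to multiplicity. *)

theory Defs
  imports "HOL-Complex_Analysis.Complex_Analysis"
begin

definition rhp :: "complex set" where
  "rhp = {s. 0 < Re s}"

definition sup_norm_rhp :: "(complex \<Rightarrow> complex) \<Rightarrow> real" where
  "sup_norm_rhp f = (SUP s\<in>rhp. cmod (f s))"

definition nontangential_limit :: "(complex \<Rightarrow> complex) \<Rightarrow> real \<Rightarrow> complex \<Rightarrow> bool" where
  "nontangential_limit f t L \<longleftrightarrow>
     (\<forall>a>0. (f \<longlongrightarrow> L) (at (\<i> * of_real t) within {z. 0 < Re z \<and> \<bar>Im z - t\<bar> < a * Re z}))"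

definition zero_mult :: "(complex \<Rightarrow> complex) \<Rightarrow> complex \<Rightarrow> nat" where
  "zero_mult f s = nat (zorder f s)"

end

theory Submission
  imports Defs
begin

text \<open>
  Write \<open>M = sup_norm_rhp f\<close> and \<open>t\<^sub>0 = \<tau> + 1/2\<close>, and pull \<open>f\<close> back to the unit disc along the
  Cayley transform \<open>w \<mapsto> \<i> t\<^sub>0 + \<gamma> (1 + w) / (1 - w)\<close>, which sends \<open>0\<close> to \<open>\<gamma> + \<i> t\<^sub>0\<close>, where
  \<open>|f| \<ge> c\<close>. Jensen's formula on circles of radius \<open>r \<rightarrow> 1\<close> bounds \<open>\<Sum> n\<^sub>b log (1 / |b|)\<close> over the
  zeros \<open>b\<close> of the pulled-back function by \<open>log (M / c)\<close>, and a zero \<open>a\<close> of \<open>f\<close> in the box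
  \<open>0 < Re a < \<gamma>\<close>, \<open>|Im a - t\<^sub>0| \<le> 1/2\<close> corresponds to a point \<open>b\<close> with
  \<open>Re a \<le> (4\<gamma>\<^sup>2 + 1) / (2\<gamma>) log (1 / |b|)\<close>.

  Jensen's formula also bounds the circle averages of \<open>log M - log |f|\<close> by \<open>log (M / c)\<close>; by
  Fatou's lemma so is the average of their radial \<open>liminf\<close>, which equals \<open>log M - log |f(\<i> t)|\<close>
  at the boundary because the Cayley transform maps radii into Stolz cones. Changing variables
  from the circle to the segment \<open>[\<tau>, \<tau> + 1]\<close> costs at most the factor \<open>\<pi> (4\<gamma>\<^sup>2 + 1) / (4\<gamma>)\<close>.
\<close>

section \<open>Circle means and Jensen's formula\<close>

lemma norm_circlepath_minus_center [simp]: "cmod (circlepath z r x - z) = \<bar>r\<bar>"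
  by (simp add: circlepath norm_mult norm_exp_eq_Re)

lemma norm_circlepath_0 [simp]: "cmod (circlepath 0 r x) = \<bar>r\<bar>"
  using norm_circlepath_minus_center[of 0] by simp

lemma mean_value_circlepath:
  fixes \<phi> :: "complex \<Rightarrow> complex"
  assumes holo: "\<phi> holomorphic_on cball z r" and r: "0 < r"
  shows "((\<lambda>x. \<phi> (circlepath z r x)) has_integral \<phi> z) {0..1}"
proof -
  have "((\<lambda>u. \<phi> u / (u - z)) has_contour_integral 2 * pi * \<i> * \<phi> z) (circlepath z r)"
    using Cauchy_integral_circlepath_simple[OF holo] r by simp
  hence "((\<lambda>x. \<phi> (circlepath z r x) / (circlepath z r x - z) *
             vector_derivative (circlepath z r) (at x within {0..1}))
          has_integral 2 * pi * \<i> * \<phi> z) {0..1}"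
    by (simp add: has_contour_integral_def)
  hence "((\<lambda>x. (2 * pi * \<i>) * \<phi> (circlepath z r x)) has_integral (2 * pi * \<i>) * \<phi> z) {0..1}"
    by (rule has_integral_eq[rotated])
       (use r in \<open>simp add: vector_derivative_circlepath01, simp add: circlepath field_simps\<close>)
  thus ?thesis
    by (simp add: has_integral_mult_right_iff)
qed

lemma ln_norm_circlepath_minus_has_integral:
  assumes r: "0 < r" and b: "cmod b < r"
  shows "((\<lambda>x. ln (cmod (circlepath 0 r x - b))) has_integral ln r) {0..1}"
proof -
  define z where "z = cnj b / r"
  have Re_pos: "0 < Re (1 - z * w)" if "cmod w \<le> 1" for w
  proof -
    have "\<bar>Re (z * w)\<bar> \<le> cmod z * cmod w"
      using abs_Re_le_cmod[of "z * w"] by (simp add: norm_mult)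
    also have "\<dots> \<le> cmod z"
      using that by (simp add: mult_left_le)
    also have "\<dots> < 1"
      using r b by (simp add: z_def norm_divide)
    finally show ?thesis by simp
  qed
  have nonzero: "1 - z * w \<noteq> 0" if "cmod w \<le> 1" for w
    using Re_pos[OF that] by (metis less_irrefl zero_complex.sel(1))
  have "1 - z * w \<notin> \<real>\<^sub>\<le>\<^sub>0" if "w \<in> cball 0 1" for w
    using Re_pos[of w] that by (auto simp: complex_nonpos_Reals_iff)
  hence "(\<lambda>w. Ln (1 - z * w)) holomorphic_on cball 0 1"
    by (intro holomorphic_intros)
  from has_integral_Re[OF mean_value_circlepath[OF this]]
  have mean: "((\<lambda>x. ln (cmod (1 - z * circlepath 0 1 x))) has_integral 0) {0..1}"
    using nonzero by simp
  \<comment> \<open>On the circle, conjugation turns \<open>r e - b\<close> into \<open>r (1 - z e)\<close> times the unimodular \<open>cnj e\<close>.\<close>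
  have factor: "cmod (circlepath 0 r x - b) = r * cmod (1 - z * circlepath 0 1 x)" for x
  proof -
    define e where "e = circlepath 0 1 x"
    have e: "cnj e * e = 1"
      using complex_norm_square[of e] by (simp add: e_def mult.commute)
    have "circlepath 0 r x = r * e"
      by (simp add: e_def circlepath)
    hence "cnj (circlepath 0 r x - b) = cnj e * (r * (1 - z * e))"
      using r e by (simp add: z_def algebra_simps)
    hence "cmod (circlepath 0 r x - b) = cmod (cnj e * (r * (1 - z * e)))"
      by (metis complex_mod_cnj)
    thus ?thesis
      using r by (simp add: norm_mult e_def)
  qed
  show ?thesis
    using has_integral_add[OF has_integral_const_real[of "ln r" 0 1] mean] r nonzero
    by (simp add: factor ln_mult)
qed

lemma finite_zeros_in_cball:
  fixes G :: "complex \<Rightarrow> complex"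
  assumes holo: "G holomorphic_on ball 0 R" and G0: "G 0 \<noteq> 0" and \<rho>: "\<rho> < R"
  shows "finite {w \<in> cball 0 \<rho>. G w = 0}"
proof (cases "G constant_on ball 0 R")
  case True
  then obtain k where k: "\<And>w. w \<in> ball 0 R \<Longrightarrow> G w = k"
    by (auto simp: constant_on_def)
  have "G w \<noteq> 0" if "w \<in> cball 0 \<rho>" for w
  proof -
    have "0 < R"
      using that \<rho> by (smt (verit) mem_cball_0 norm_ge_zero)
    thus ?thesis
      using that \<rho> k[of w] k[of 0] G0 by simp
  qed
  hence "{w \<in> cball 0 \<rho>. G w = 0} = {}"
    by blast
  thus ?thesis
    by (metis finite.emptyI)
next
  case False
  show ?thesis
    by (rule holomorphic_compact_finite_zeros[OF holo _ _ _ _ False]) (use \<rho> in auto)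
qed

lemma exists_radius_without_zeros:
  fixes G :: "complex \<Rightarrow> complex"
  assumes holo: "G holomorphic_on ball 0 1" and G0: "G 0 \<noteq> 0" and ab: "a < b" "b < 1"
  obtains r where "a < r" "r < b" "\<And>w. cmod w = r \<Longrightarrow> G w \<noteq> 0"
proof -
  have "finite (cmod ` {w \<in> cball 0 b. G w = 0})"
    using finite_zeros_in_cball[OF holo G0 ab(2)] by simp
  moreover have "infinite {a<..<b}"
    using ab by simp
  ultimately obtain r where "r \<in> {a<..<b}" "r \<notin> cmod ` {w \<in> cball 0 b. G w = 0}"
    by (meson finite_subset subsetI)
  thus ?thesis
    by (intro that[of r]) auto
qed

lemma radii_without_zeros_tendsto_1:
  fixes G :: "complex \<Rightarrow> complex"
  assumes holo: "G holomorphic_on ball 0 1" and G0: "G 0 \<noteq> 0"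
  obtains r :: "nat \<Rightarrow> real"
  where "\<And>n. 0 < r n" "\<And>n. r n < 1" "\<And>n w. cmod w = r n \<Longrightarrow> G w \<noteq> 0" "r \<longlonglongrightarrow> 1"
proof -
  have "\<exists>\<rho>. 1 - 1 / Suc n < \<rho> \<and> \<rho> < 1 \<and> (\<forall>w. cmod w = \<rho> \<longrightarrow> G w \<noteq> 0)" for n
  proof -
    have bounds: "1 - 1 / Suc n < 1 - 1 / (2 * Suc n)" "1 - 1 / (2 * Suc n) < 1"
      by (auto simp: field_simps)
    obtain \<rho> where "1 - 1 / Suc n < \<rho>" "\<rho> < 1 - 1 / (2 * Suc n)"
      "\<And>w. cmod w = \<rho> \<Longrightarrow> G w \<noteq> 0"
      using exists_radius_without_zeros[OF holo G0 bounds] by blast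
    thus ?thesis
      by (intro exI[of _ \<rho>]) (auto intro: order.strict_trans2)
  qed
  then obtain r where r: "\<And>n. 1 - 1 / Suc n < r n" "\<And>n. r n < 1"
    "\<And>n w. cmod w = r n \<Longrightarrow> G w \<noteq> 0"
    by metis
  have "0 \<le> 1 - 1 / real (Suc n)" for n
    by (simp add: field_simps)
  hence "0 < r n" for n
    using r(1) by (rule le_less_trans)
  moreover have "(\<lambda>n. 1 - 1 / real (Suc n)) \<longlonglongrightarrow> 1"
    using tendsto_diff[OF tendsto_const LIMSEQ_inverse_real_of_nat] by (simp add: inverse_eq_divide)
  hence "r \<longlonglongrightarrow> 1"
    by (rule tendsto_sandwich[rotated 2, OF _ tendsto_const])
       (auto intro!: always_eventually less_imp_le r simp del: of_nat_Suc)
  ultimately show ?thesis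
    using that r by blast
qed

lemma zorder_power_linear:
  fixes b z :: complex
  shows "zorder (\<lambda>w. (w - b) ^ m) z = (if z = b then int m else 0)"
proof (cases "z = b")
  case True
  have "zorder (\<lambda>w. (w - b) ^ m) b = int m"
    by (rule zorder_eqI[where S = UNIV and g = "\<lambda>_. 1"]) (auto simp: power_int_of_nat)
  thus ?thesis
    using True by simp
next
  case False
  thus ?thesis
    by (auto intro!: zorder_eq_0I analytic_intros)
qed

lemma zorder_prod_power_linear:
  fixes Z :: "complex set"
  assumes "finite Z"
  shows "zorder (\<lambda>w. \<Prod>b\<in>Z. (w - b) ^ n b) z = (if z \<in> Z then int (n z) else 0)"
proof -
  have "eventually (\<lambda>w. w \<notin> Z) (at z)"
    using islimpt_finite[OF assms] islimpt_iff_eventually by blast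
  hence "zorder (\<lambda>w. \<Prod>b\<in>Z. (w - b) ^ n b) z = (\<Sum>b\<in>Z. zorder (\<lambda>w. (w - b) ^ n b) z)"
    by (intro zorder_prod_analytic) (auto intro!: analytic_intros elim!: eventually_mono simp: assms)
  also have "\<dots> = (if z \<in> Z then int (n z) else 0)"
    using assms by (simp add: zorder_power_linear sum.delta)
  finally show ?thesis .
qed

lemma ln_norm_prod_power:
  fixes w :: complex
  assumes "finite Z" "w \<notin> Z"
  shows "ln (cmod (\<Prod>b\<in>Z. (w - b) ^ n b)) = (\<Sum>b\<in>Z. real (n b) * ln (cmod (w - b)))"
proof -
  have "ln (cmod (\<Prod>b\<in>Z. (w - b) ^ n b)) = ln (\<Prod>b\<in>Z. cmod (w - b) ^ n b)"
    by (simp add: prod_norm[symmetric] norm_power)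
  also have "\<dots> = (\<Sum>b\<in>Z. ln (cmod (w - b) ^ n b))"
    by (rule ln_prod) (use assms in auto)
  finally show ?thesis
    by (simp add: ln_realpow)
qed

lemma circle_mean_ln_norm_nonvanishing:
  fixes h :: "complex \<Rightarrow> complex"
  assumes holo: "h holomorphic_on ball z R" and nz: "\<And>w. w \<in> ball z R \<Longrightarrow> h w \<noteq> 0"
    and r: "0 < r" "r < R"
  shows "((\<lambda>x. ln (cmod (h (circlepath z r x)))) has_integral ln (cmod (h z))) {0..1}"
proof -
  obtain L where L: "L holomorphic_on ball z R" "\<And>w. w \<in> ball z R \<Longrightarrow> exp (L w) = h w"
    using holomorphic_logarithm_exists[OF convex_ball open_ball holo nz, of z] r by auto
  have ln_h: "ln (cmod (h w)) = Re (L w)" if "w \<in> ball z R" for w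
    using L(2)[OF that] by (metis norm_exp_eq_Re ln_exp)
  have "circlepath z r x \<in> ball z R" for x
    using r norm_minus_commute[of z "circlepath z r x"] by (simp add: dist_norm)
  hence "ln (cmod (h (circlepath z r x))) = Re (L (circlepath z r x))" for x
    by (rule ln_h)
  moreover have "ln (cmod (h z)) = Re (L z)"
    using r by (intro ln_h) simp
  moreover have "cball z r \<subseteq> ball z R"
    using r by auto
  note has_integral_Re[OF mean_value_circlepath[OF holomorphic_on_subset[OF L(1) this] r(1)]]
  ultimately show ?thesis
    by simp
qed

lemma holomorphic_factor_zeros:
  fixes G :: "complex \<Rightarrow> complex"
  assumes holo: "G holomorphic_on A" and A: "open A" "connected A"
    and Z: "finite Z" "Z = {w \<in> A. G w = 0}" and nz: "\<exists>w\<in>A. G w \<noteq> 0"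
  obtains h where "h holomorphic_on A" "\<And>w. w \<in> A \<Longrightarrow> h w \<noteq> 0"
    "\<And>w. w \<in> A \<Longrightarrow> G w = h w * (\<Prod>b\<in>Z. (w - b) ^ zero_mult G b)"
proof -
  define P where "P w = (\<Prod>b\<in>Z. (w - b) ^ zero_mult G b)" for w
  have zorder_G: "if G z = 0 then zorder G z > 0 else zorder G z = 0" if "z \<in> A" for z
    using zorder_exist_zero[OF holo A that nz] by blast
  have zorder_P: "zorder P z = (if z \<in> Z then int (zero_mult G z) else 0)" for z
    unfolding P_def by (rule zorder_prod_power_linear[OF Z(1)])
  have "P z = 0 \<longleftrightarrow> G z = 0" if "z \<in> A" for z
    using zorder_G[OF that] Z that by (auto simp: P_def zero_mult_def)
  moreover have "zorder P z = zorder G z" if "z \<in> A" for z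
    using zorder_G[OF that] Z that by (auto simp: zorder_P zero_mult_def)
  moreover have "P holomorphic_on A"
    unfolding P_def by (intro holomorphic_intros)
  ultimately obtain h where "h holomorphic_on A" "\<And>w. w \<in> A \<Longrightarrow> h w \<noteq> 0"
    "\<And>w. w \<in> A \<Longrightarrow> G w = h w * P w"
    using holomorphic_zorder_factorization[OF holo A] by metis
  thus ?thesis
    using that by (simp add: P_def)
qed

lemma exists_larger_radius_same_zeros:
  fixes G :: "complex \<Rightarrow> complex"
  assumes holo: "G holomorphic_on ball 0 R" and G0: "G 0 \<noteq> 0" and r: "r < R"
    and circle: "\<And>w. cmod w = r \<Longrightarrow> G w \<noteq> 0"
  obtains r' where "r < r'" "r' < R" "{w \<in> ball 0 r'. G w = 0} = {w \<in> ball 0 r. G w = 0}"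
proof -
  define \<rho> where "\<rho> = (r + R) / 2"
  have \<rho>: "r < \<rho>" "\<rho> < R"
    using r by (auto simp: \<rho>_def)
  define S where "S = cmod ` {w \<in> cball 0 \<rho>. G w = 0 \<and> r < cmod w}"
  have "finite S"
    unfolding S_def
    by (rule finite_imageI, rule finite_subset[OF _ finite_zeros_in_cball[OF holo G0 \<rho>(2)]]) auto
  define r' where "r' = Min (insert \<rho> S)"
  have "r < r'" "r' \<le> \<rho>"
    using \<open>finite S\<close> \<rho> by (auto simp: r'_def S_def)
  moreover have "cmod w < r" if "cmod w < r'" "G w = 0" for w
  proof (rule ccontr)
    assume "\<not> cmod w < r"
    hence "cmod w \<in> S"
      using that circle[of w] \<open>r' \<le> \<rho>\<close> by (force simp: S_def)
    hence "r' \<le> cmod w"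
      using \<open>finite S\<close> by (simp add: r'_def)
    thus False
      using that by simp
  qed
  ultimately show ?thesis
    using that \<rho> by force
qed

theorem Jensen_formula:
  fixes G :: "complex \<Rightarrow> complex"
  assumes holo: "G holomorphic_on ball 0 R" and G0: "G 0 \<noteq> 0" and r: "0 < r" "r < R"
    and circle: "\<And>w. cmod w = r \<Longrightarrow> G w \<noteq> 0"
  shows "((\<lambda>x. ln (cmod (G (circlepath 0 r x)))) has_integral
           ln (cmod (G 0)) + (\<Sum>b\<in>{w \<in> ball 0 r. G w = 0}. real (zero_mult G b) * ln (r / cmod b)))
         {0..1}"
proof -
  define Z where "Z = {w \<in> ball 0 r. G w = 0}"
  define n where "n b = real (zero_mult G b)" for b
  obtain r' where r': "r < r'" "r' < R" "{w \<in> ball 0 r'. G w = 0} = Z"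
    using exists_larger_radius_same_zeros[OF holo G0 r(2) circle] unfolding Z_def by blast
  have "finite Z"
    using finite_zeros_in_cball[OF holo G0 r(2)] by (rule finite_subset[rotated]) (auto simp: Z_def)
  moreover have "G holomorphic_on ball 0 r'"
    by (rule holomorphic_on_subset[OF holo]) (use r' in auto)
  moreover have "Z = {w \<in> ball 0 r'. G w = 0}" "\<exists>w\<in>ball 0 r'. G w \<noteq> 0"
    using r r' G0 by (auto intro!: bexI[of _ 0])
  ultimately obtain h where h: "h holomorphic_on ball 0 r'" "\<And>w. w \<in> ball 0 r' \<Longrightarrow> h w \<noteq> 0"
    "\<And>w. w \<in> ball 0 r' \<Longrightarrow> G w = h w * (\<Prod>b\<in>Z. (w - b) ^ zero_mult G b)"
    using holomorphic_factor_zeros[of G "ball 0 r'" Z] by blast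
  have ln_G: "ln (cmod (G w)) = ln (cmod (h w)) + (\<Sum>b\<in>Z. n b * ln (cmod (w - b)))"
    if "w \<in> ball 0 r'" "G w \<noteq> 0" for w
  proof -
    have "w \<notin> Z"
      using that by (simp add: Z_def)
    thus ?thesis
      using that h(2,3)[OF that(1)] \<open>finite Z\<close>
      by (simp add: norm_mult ln_mult ln_norm_prod_power n_def)
  qed
  have "cmod b < r" if "b \<in> Z" for b
    using that by (simp add: Z_def)
  hence "((\<lambda>x. \<Sum>b\<in>Z. n b * ln (cmod (circlepath 0 r x - b))) has_integral (\<Sum>b\<in>Z. n b * ln r)) {0..1}"
    by (intro has_integral_sum \<open>finite Z\<close> has_integral_mult_right ln_norm_circlepath_minus_has_integral r)
  from has_integral_add[OF circle_mean_ln_norm_nonvanishing[OF h(1,2) r(1) r'(1)] this]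
  have "((\<lambda>x. ln (cmod (G (circlepath 0 r x)))) has_integral
          ln (cmod (h 0)) + (\<Sum>b\<in>Z. n b * ln r)) {0..1}"
    using r r' circle by (simp add: ln_G)
  moreover have "ln (cmod (h 0)) + (\<Sum>b\<in>Z. n b * ln r) = ln (cmod (G 0)) + (\<Sum>b\<in>Z. n b * ln (r / cmod b))"
  proof -
    have "0 < cmod b" if "b \<in> Z" for b
      using that G0 by (auto simp: Z_def)
    hence "(\<Sum>b\<in>Z. n b * ln (r / cmod b)) = (\<Sum>b\<in>Z. n b * ln r) - (\<Sum>b\<in>Z. n b * ln (cmod b))"
      using r by (simp add: ln_div right_diff_distrib sum_subtractf)
    thus ?thesis
      using ln_G[of 0] r r' G0 by simp
  qed
  ultimately show ?thesis
    by (simp add: Z_def n_def)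
qed

section \<open>Consequences of Jensen's formula in the unit disc\<close>

lemma circle_mean_ln_norm_ge_zero_sum:
  fixes G :: "complex \<Rightarrow> complex"
  assumes holo: "G holomorphic_on ball 0 R" and G0: "G 0 \<noteq> 0" and r: "0 < r" "r < R"
    and circle: "\<And>w. cmod w = r \<Longrightarrow> G w \<noteq> 0"
    and F: "F \<subseteq> {w \<in> ball 0 r. G w = 0}"
  obtains I where "((\<lambda>x. ln (cmod (G (circlepath 0 r x)))) has_integral I) {0..1}"
    "ln (cmod (G 0)) + (\<Sum>b\<in>F. real (zero_mult G b) * ln (r / cmod b)) \<le> I"
proof
  show "((\<lambda>x. ln (cmod (G (circlepath 0 r x)))) has_integral
          ln (cmod (G 0)) + (\<Sum>b\<in>{w \<in> ball 0 r. G w = 0}. real (zero_mult G b) * ln (r / cmod b)))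
        {0..1}"
    by (rule Jensen_formula[OF holo G0 r circle])
  have "finite {w \<in> ball 0 r. G w = 0}"
    using finite_zeros_in_cball[OF holo G0 r(2)] by (rule finite_subset[rotated]) auto
  moreover have "0 \<le> ln (r / cmod b)" if "b \<in> {w \<in> ball 0 r. G w = 0}" for b
    using that G0 by (cases "b = 0") (auto simp: field_simps)
  ultimately show "ln (cmod (G 0)) + (\<Sum>b\<in>F. real (zero_mult G b) * ln (r / cmod b)) \<le>
      ln (cmod (G 0)) + (\<Sum>b\<in>{w \<in> ball 0 r. G w = 0}. real (zero_mult G b) * ln (r / cmod b))"
    using F by (intro add_left_mono sum_mono2) auto
qed

lemma ln_norm_circlepath_le:
  fixes G :: "complex \<Rightarrow> complex"
  assumes "0 < r" "r < 1" "\<And>w. cmod w = r \<Longrightarrow> G w \<noteq> 0" "\<And>w. cmod w < 1 \<Longrightarrow> cmod (G w) \<le> M"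
  shows "ln (cmod (G (circlepath 0 r x))) \<le> ln M"
proof -
  have "0 < cmod (G (circlepath 0 r x))" "cmod (G (circlepath 0 r x)) \<le> M"
    using assms(1,2) assms(3,4)[of "circlepath 0 r x"] by simp_all
  thus ?thesis
    by (metis ln_le_cancel_iff order_less_le_trans)
qed

lemma zero_sum_ln_inverse_norm_le:
  fixes G :: "complex \<Rightarrow> complex"
  assumes holo: "G holomorphic_on ball 0 1" and G0: "G 0 \<noteq> 0"
    and bound: "\<And>w. cmod w < 1 \<Longrightarrow> cmod (G w) \<le> M"
    and F: "finite F" "F \<subseteq> {w \<in> ball 0 1. G w = 0}"
  shows "(\<Sum>b\<in>F. real (zero_mult G b) * ln (1 / cmod b)) \<le> ln M - ln (cmod (G 0))"
proof -
  obtain r where r: "\<And>n. 0 < r n" "\<And>n. r n < 1" "\<And>n w. cmod w = r n \<Longrightarrow> G w \<noteq> 0" "r \<longlonglongrightarrow> 1"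
    using radii_without_zeros_tendsto_1[OF holo G0] by blast
  have "eventually (\<lambda>n. \<forall>b\<in>F. cmod b < r n) sequentially"
    using F by (intro eventually_ball_finite ballI order_tendstoD(1)[OF r(4)]) auto
  hence "eventually (\<lambda>n. (\<Sum>b\<in>F. real (zero_mult G b) * ln (r n / cmod b)) \<le> ln M - ln (cmod (G 0)))
           sequentially"
  proof eventually_elim
    case (elim n)
    have circle: "\<And>w. cmod w = r n \<Longrightarrow> G w \<noteq> 0" and Fn: "F \<subseteq> {w \<in> ball 0 (r n). G w = 0}"
      using r(3) elim F by auto
    obtain I where I: "((\<lambda>x. ln (cmod (G (circlepath 0 (r n) x)))) has_integral I) {0..1}"
      "ln (cmod (G 0)) + (\<Sum>b\<in>F. real (zero_mult G b) * ln (r n / cmod b)) \<le> I"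
      using circle_mean_ln_norm_ge_zero_sum[OF holo G0 r(1)[of n] r(2)[of n] circle Fn] by blast
    have "I \<le> ln M"
      using has_integral_le[OF I(1) has_integral_const_real[of "ln M" 0 1]]
            ln_norm_circlepath_le[where G = G, OF r(1)[of n] r(2)[of n] circle bound] by simp
    thus ?case
      using I(2) by simp
  qed
  moreover have "(\<lambda>n. \<Sum>b\<in>F. real (zero_mult G b) * ln (r n / cmod b)) \<longlonglongrightarrow>
      (\<Sum>b\<in>F. real (zero_mult G b) * ln (1 / cmod b))"
    using F G0 by (intro tendsto_intros r(4)) auto
  ultimately show ?thesis
    by (intro tendsto_upperbound) auto
qed

lemma borel_measurable_ln_norm_circlepath:
  fixes G :: "complex \<Rightarrow> complex"
  assumes holo: "G holomorphic_on ball 0 1" and r: "0 < r" "r < 1"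
    and circle: "\<And>w. cmod w = r \<Longrightarrow> G w \<noteq> 0"
  shows "(\<lambda>x. ln (cmod (G (circlepath 0 r x)))) \<in> borel_measurable borel"
proof -
  have "continuous_on UNIV (circlepath 0 r)"
    unfolding circlepath by (intro continuous_intros)
  moreover have "circlepath 0 r ` UNIV \<subseteq> ball 0 1"
    using r by auto
  ultimately have "continuous_on UNIV (\<lambda>x. G (circlepath 0 r x))"
    by (rule continuous_on_compose2[OF holomorphic_on_imp_continuous_on[OF holo]])
  moreover have "G (circlepath 0 r x) \<noteq> 0" for x
    using r circle[of "circlepath 0 r x"] by simp
  ultimately show ?thesis
    by (intro borel_measurable_continuous_onI continuous_intros) auto
qed

lemma nn_integral_ln_deficit_circlepath_le:
  fixes G :: "complex \<Rightarrow> complex"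
  assumes holo: "G holomorphic_on ball 0 1" and G0: "G 0 \<noteq> 0"
    and bound: "\<And>w. cmod w < 1 \<Longrightarrow> cmod (G w) \<le> M"
    and r: "0 < r" "r < 1" and circle: "\<And>w. cmod w = r \<Longrightarrow> G w \<noteq> 0"
  shows "(\<integral>\<^sup>+x\<in>{0..1}. ennreal (ln M - ln (cmod (G (circlepath 0 r x)))) \<partial>lborel)
           \<le> ennreal (ln M - ln (cmod (G 0)))"
proof -
  obtain I where I: "((\<lambda>x. ln (cmod (G (circlepath 0 r x)))) has_integral I) {0..1}"
    "ln (cmod (G 0)) \<le> I"
    using circle_mean_ln_norm_ge_zero_sum[OF holo G0 r circle, where F = "{}"] by auto
  have "((\<lambda>x. ln M - ln (cmod (G (circlepath 0 r x)))) has_integral ln M - I) {0..1}"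
    by (rule has_integral_diff[OF _ I(1)]) (use has_integral_const_real[of "ln M" 0 1] in simp)
  moreover have "0 \<le> ln M - ln (cmod (G (circlepath 0 r x)))" for x
    using ln_norm_circlepath_le[OF r circle bound] by simp
  ultimately have "(\<integral>\<^sup>+x\<in>{0..1}. ennreal (ln M - ln (cmod (G (circlepath 0 r x)))) \<partial>lborel)
      = ennreal (ln M - I)"
    by (intro nn_integral_has_integral_lebesgue') auto
  thus ?thesis
    using I(2) by (simp add: ennreal_leI)
qed

lemma nn_integral_liminf_circle_le:
  fixes G :: "complex \<Rightarrow> complex" and r :: "nat \<Rightarrow> real"
  assumes holo: "G holomorphic_on ball 0 1" and G0: "G 0 \<noteq> 0"
    and bound: "\<And>w. cmod w < 1 \<Longrightarrow> cmod (G w) \<le> M"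
    and r: "\<And>n. 0 < r n" "\<And>n. r n < 1" "\<And>n w. cmod w = r n \<Longrightarrow> G w \<noteq> 0"
  shows "(\<integral>\<^sup>+x\<in>{0..1}. liminf (\<lambda>n. ennreal (ln M - ln (cmod (G (circlepath 0 (r n) x))))) \<partial>lborel)
           \<le> ennreal (ln M - ln (cmod (G 0)))"
proof -
  have [measurable]: "(\<lambda>x. ln (cmod (G (circlepath 0 (r n) x)))) \<in> borel_measurable borel" for n
    by (rule borel_measurable_ln_norm_circlepath[OF holo r(1,2)]) (use r(3) in blast)
  have deficit: "(\<integral>\<^sup>+x\<in>{0..1}. ennreal (ln M - ln (cmod (G (circlepath 0 (r n) x)))) \<partial>lborel)
      \<le> ennreal (ln M - ln (cmod (G 0)))" for n
    using bound r by (intro nn_integral_ln_deficit_circlepath_le[OF holo G0]) auto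
  have "(\<integral>\<^sup>+x\<in>{0..1}. liminf (\<lambda>n. ennreal (ln M - ln (cmod (G (circlepath 0 (r n) x))))) \<partial>lborel)
      = (\<integral>\<^sup>+x. liminf (\<lambda>n. ennreal (ln M - ln (cmod (G (circlepath 0 (r n) x)))) * indicator {0..1} x)
             \<partial>lborel)"
    by (intro nn_integral_cong) (auto simp: indicator_def Liminf_const)
  also have "\<dots> \<le> liminf (\<lambda>n. \<integral>\<^sup>+x\<in>{0..1}. ennreal (ln M - ln (cmod (G (circlepath 0 (r n) x)))) \<partial>lborel)"
    by (rule nn_integral_liminf) measurable
  also have "\<dots> \<le> ennreal (ln M - ln (cmod (G 0)))"
    by (rule Liminf_le) (auto intro!: always_eventually deficit)
  finally show ?thesis .
qed

lemma abs_ln_norm_radial_limit_le: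
  fixes G :: "complex \<Rightarrow> complex" and r :: "nat \<Rightarrow> real"
  assumes bound: "\<And>w. cmod w < 1 \<Longrightarrow> cmod (G w) \<le> M" and r: "\<And>n. 0 < r n" "\<And>n. r n < 1"
    and lim: "(\<lambda>n. G (circlepath 0 (r n) x)) \<longlonglongrightarrow> L"
  shows "ennreal \<bar>ln (cmod L)\<bar>
           \<le> ennreal \<bar>ln M\<bar> + liminf (\<lambda>n. ennreal (ln M - ln (cmod (G (circlepath 0 (r n) x)))))"
proof (cases "L = 0")
  case False
  have "cmod L \<le> M"
    by (intro tendsto_upperbound[OF tendsto_norm[OF lim]] always_eventually allI bound)
       (simp_all add: abs_of_pos[OF r(1)] r(2))
  hence "ln (cmod L) \<le> ln M"
    using False by (intro ln_mono) auto
  moreover have "liminf (\<lambda>n. ennreal (ln M - ln (cmod (G (circlepath 0 (r n) x)))))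
      = ennreal (ln M - ln (cmod L))"
    using False by (intro lim_imp_Liminf tendsto_ennrealI tendsto_intros lim) auto
  ultimately show ?thesis
    by (simp add: ennreal_plus[symmetric] del: ennreal_plus)
qed simp \<comment> \<open>for \<open>L = 0\<close> the left-hand side vanishes, as \<open>ln 0 = 0\<close>\<close>

section \<open>The Cayley transform onto the half-plane\<close>

definition disc_to_rhp :: "real \<Rightarrow> real \<Rightarrow> complex \<Rightarrow> complex" where
  "disc_to_rhp \<gamma> t0 w = \<i> * t0 + \<gamma> * (1 + w) / (1 - w)"

definition rhp_to_disc :: "real \<Rightarrow> real \<Rightarrow> complex \<Rightarrow> complex" where
  "rhp_to_disc \<gamma> t0 s = (s - Complex \<gamma> t0) / (s + Complex \<gamma> (- t0))"

lemma disc_to_rhp_0 [simp]: "disc_to_rhp \<gamma> t0 0 = Complex \<gamma> t0"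
  by (simp add: disc_to_rhp_def complex_eq_iff)

lemma Re_disc_to_rhp:
  assumes "w \<noteq> 1"
  shows "Re (disc_to_rhp \<gamma> t0 w) = \<gamma> * (1 - (cmod w)\<^sup>2) / (cmod (1 - w))\<^sup>2"
proof -
  have "Re (disc_to_rhp \<gamma> t0 w) = \<gamma> * Re ((1 + w) / (1 - w))"
    by (simp add: disc_to_rhp_def mult.assoc[symmetric] times_divide_eq_right[symmetric]
             del: times_divide_eq_right)
  also have "Re ((1 + w) / (1 - w)) = (1 - (cmod w)\<^sup>2) / (cmod (1 - w))\<^sup>2"
    unfolding Re_divide cmod_power2 by (simp add: power2_eq_square algebra_simps)
  finally show ?thesis
    by simp
qed

lemma Re_disc_to_rhp_pos:
  assumes "0 < \<gamma>" "cmod w < 1"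
  shows "0 < Re (disc_to_rhp \<gamma> t0 w)"
proof -
  have "w \<noteq> 1" "(cmod w)\<^sup>2 < 1"
    using assms(2) by (auto simp: abs_square_less_1)
  thus ?thesis
    using assms(1) by (simp add: Re_disc_to_rhp)
qed

lemma holomorphic_on_disc_to_rhp: "disc_to_rhp \<gamma> t0 holomorphic_on - {1}"
  unfolding disc_to_rhp_def by (intro holomorphic_intros) auto

lemma disc_to_rhp_diff:
  assumes "w \<noteq> 1" "b \<noteq> 1"
  shows "disc_to_rhp \<gamma> t0 w - disc_to_rhp \<gamma> t0 b = 2 * \<gamma> * (w - b) / ((1 - w) * (1 - b))"
proof -
  have "1 - w \<noteq> 0" "1 - b \<noteq> 0"
    using assms by auto
  thus ?thesis
    unfolding disc_to_rhp_def by (simp add: field_simps)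
qed

lemma rhp_to_disc_ne_1:
  assumes "0 < \<gamma>" "0 < Re s"
  shows "rhp_to_disc \<gamma> t0 s \<noteq> 1"
proof
  assume "rhp_to_disc \<gamma> t0 s = 1"
  moreover have "s + Complex \<gamma> (- t0) \<noteq> 0"
    using assms by (auto simp: complex_eq_iff)
  ultimately have "s - Complex \<gamma> t0 = s + Complex \<gamma> (- t0)"
    by (simp add: rhp_to_disc_def field_simps)
  thus False
    using assms(1) by (simp add: complex_eq_iff)
qed

lemma disc_to_rhp_rhp_to_disc:
  assumes "0 < \<gamma>" "0 < Re s"
  shows "disc_to_rhp \<gamma> t0 (rhp_to_disc \<gamma> t0 s) = s"
proof -
  define D where "D = s + Complex \<gamma> (- t0)"
  have D: "D \<noteq> 0"
    using assms by (auto simp: D_def complex_eq_iff)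
  have "1 + rhp_to_disc \<gamma> t0 s = 2 * (s - \<i> * t0) / D" "1 - rhp_to_disc \<gamma> t0 s = 2 * \<gamma> / D"
    using D by (simp_all add: rhp_to_disc_def D_def Complex_eq field_simps)
  hence quotient: "(1 + rhp_to_disc \<gamma> t0 s) / (1 - rhp_to_disc \<gamma> t0 s) = (s - \<i> * t0) / \<gamma>"
    using D assms(1) by (simp only:) (simp add: field_simps)
  have "disc_to_rhp \<gamma> t0 (rhp_to_disc \<gamma> t0 s) =
      \<i> * t0 + \<gamma> * ((1 + rhp_to_disc \<gamma> t0 s) / (1 - rhp_to_disc \<gamma> t0 s))"
    by (simp add: disc_to_rhp_def)
  also have "\<dots> = s"
    unfolding quotient using assms(1) by simp
  finally show ?thesis .
qed

lemma norm_rhp_to_disc_less_1: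
  assumes "0 < \<gamma>" "0 < Re s"
  shows "cmod (rhp_to_disc \<gamma> t0 s) < 1"
proof -
  have "(cmod (s - Complex \<gamma> t0))\<^sup>2 < (cmod (s + Complex \<gamma> (- t0)))\<^sup>2"
    using assms unfolding cmod_power2 by (simp add: power2_eq_square algebra_simps)
  hence "cmod (s - Complex \<gamma> t0) < cmod (s + Complex \<gamma> (- t0))"
    by (rule power2_less_imp_less) simp
  thus ?thesis
    by (simp add: rhp_to_disc_def norm_divide divide_less_eq)
qed

definition boundary_angle :: "real \<Rightarrow> real \<Rightarrow> real" where
  "boundary_angle \<gamma> u = 1/2 + arctan (u / \<gamma>) / pi"

lemma boundary_angle_bounds: "0 < boundary_angle \<gamma> u" "boundary_angle \<gamma> u < 1"
  using arctan_bounded[of "u / \<gamma>"] pi_gt_zero by (auto simp: boundary_angle_def field_simps)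

lemma continuous_on_boundary_angle: "continuous_on A (boundary_angle \<gamma>)"
  unfolding boundary_angle_def divide_inverse by (intro continuous_intros)

lemma has_real_derivative_boundary_angle:
  assumes "0 < \<gamma>"
  shows "(boundary_angle \<gamma> has_real_derivative \<gamma> / (pi * (\<gamma>\<^sup>2 + u\<^sup>2))) (at u)"
proof -
  have "((\<lambda>u. 1/2 + arctan (u / \<gamma>) / pi) has_real_derivative inverse (1 + (u / \<gamma>)\<^sup>2) * (1 / \<gamma>) / pi) (at u)"
    using assms by (auto intro!: derivative_eq_intros)
  moreover have "inverse (1 + (u / \<gamma>)\<^sup>2) * (1 / \<gamma>) / pi = \<gamma> / (pi * (\<gamma>\<^sup>2 + u\<^sup>2))"
    using assms by (simp add: field_simps power2_eq_square add_pos_nonneg)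
  ultimately show ?thesis
    by (simp add: boundary_angle_def[abs_def])
qed

lemma disc_to_rhp_boundary_angle:
  assumes "0 < \<gamma>"
  shows "circlepath 0 1 (boundary_angle \<gamma> u) \<noteq> 1"
    and "disc_to_rhp \<gamma> t0 (circlepath 0 1 (boundary_angle \<gamma> u)) = \<i> * (t0 - u)"
proof -
  define a where "a = arctan (u / \<gamma>)"
  define c where "c = cos a"
  define s where "s = sin a"
  have c: "0 < c"
    by (simp add: c_def a_def cos_arctan add_pos_nonneg)
  have u: "u = \<gamma> * s / c"
    using tan_arctan[of "u / \<gamma>"] assms c by (simp add: a_def s_def c_def tan_def field_simps)
  have sc: "s\<^sup>2 + c\<^sup>2 = 1"
    by (simp add: s_def c_def)
  define w where "w = circlepath 0 1 (boundary_angle \<gamma> u)"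
  have "w = - exp (\<i> * (2 * a))"
    by (simp add: w_def circlepath boundary_angle_def a_def algebra_simps exp_add exp_pi_i')
  hence w: "w = - Complex (c\<^sup>2 - s\<^sup>2) (2 * s * c)"
    unfolding exp_Euler
    by (simp add: complex_eq_iff cos_of_real sin_of_real cos_double sin_double c_def s_def power2_eq_square)
  have w1: "1 - w = 2 * c * Complex c s" and w2: "1 + w = - \<i> * 2 * s * Complex c s"
    unfolding w using sc by (simp_all add: complex_eq_iff power2_eq_square algebra_simps)
  have "Complex c s \<noteq> 0"
    using c by (simp add: complex_eq_iff)
  hence "1 - w \<noteq> 0"
    unfolding w1 using c by simp
  thus "circlepath 0 1 (boundary_angle \<gamma> u) \<noteq> 1"
    by (simp add: w_def)
  have "\<gamma> * (1 + w) / (1 - w) = - \<i> * u"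
    unfolding w1 w2 u using c \<open>Complex c s \<noteq> 0\<close> assms by (simp add: field_simps)
  thus "disc_to_rhp \<gamma> t0 (circlepath 0 1 (boundary_angle \<gamma> u)) = \<i> * (t0 - u)"
    unfolding disc_to_rhp_def w_def[symmetric] by (simp add: algebra_simps)
qed

lemma norm_minus_radial:
  fixes w0 :: complex
  assumes "cmod w0 = 1" "\<rho> \<le> 1"
  shows "cmod (w0 - \<rho> * w0) = 1 - \<rho>"
proof -
  have "w0 - \<rho> * w0 = of_real (1 - \<rho>) * w0"
    by (simp add: algebra_simps)
  thus ?thesis
    using assms by (simp add: norm_mult del: of_real_diff)
qed

lemma norm_disc_to_rhp_radial_diff:
  fixes w0 :: complex
  assumes \<gamma>: "0 < \<gamma>" and w0: "cmod w0 = 1" "w0 \<noteq> 1" and \<rho>: "0 < \<rho>" "\<rho> < 1"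
  shows "cmod (disc_to_rhp \<gamma> t0 (\<rho> * w0) - disc_to_rhp \<gamma> t0 w0)
           = 2 * \<gamma> * (1 - \<rho>) / (cmod (1 - \<rho> * w0) * cmod (1 - w0))"
proof -
  have "cmod (\<rho> * w0) = \<rho>"
    using w0 \<rho> by (simp add: norm_mult)
  hence "\<rho> * w0 \<noteq> 1"
    using \<rho> by auto
  hence "disc_to_rhp \<gamma> t0 (\<rho> * w0) - disc_to_rhp \<gamma> t0 w0 = 2 * \<gamma> * (\<rho> * w0 - w0) / ((1 - \<rho> * w0) * (1 - w0))"
    using disc_to_rhp_diff[OF _ w0(2)] by simp
  moreover have "cmod (\<rho> * w0 - w0) = 1 - \<rho>"
    using norm_minus_radial[OF w0(1), of \<rho>] \<rho> by (simp add: norm_minus_commute)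
  ultimately show ?thesis
    using \<gamma> by (simp add: norm_mult norm_divide)
qed

lemma disc_to_rhp_radial_in_cone:
  fixes \<gamma> t0 \<rho> :: real and w0 :: complex
  assumes \<gamma>: "0 < \<gamma>" and w0: "cmod w0 = 1" "w0 \<noteq> 1"
    and \<rho>: "1 / (1 + cmod (1 - w0)) < \<rho>" "\<rho> < 1"
  defines "z \<equiv> disc_to_rhp \<gamma> t0 (\<rho> * w0)" and "p \<equiv> disc_to_rhp \<gamma> t0 w0"
  shows "z \<noteq> p" "0 < Re z" "\<bar>Im z - Im p\<bar> < 2 * Re z"
proof -
  define A where "A = cmod (1 - \<rho> * w0)"
  define B where "B = cmod (1 - w0)"
  have B: "0 < B"
    using w0 by (simp add: B_def)
  have \<rho>_B: "1 / (1 + B) < \<rho>"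
    using \<rho>(1) by (simp add: B_def)
  moreover have "0 < 1 / (1 + B)"
    using B by simp
  ultimately have \<rho>_pos: "0 < \<rho>"
    by linarith
  have \<rho>B: "1 < \<rho> * (1 + B)"
    using \<rho>_B B by (simp add: pos_divide_less_eq mult.commute)
  have norm_w: "cmod (\<rho> * w0) = \<rho>"
    using \<rho>_pos w0 by (simp add: norm_mult)
  hence w1: "\<rho> * w0 \<noteq> 1"
    using \<rho> by auto
  hence A: "0 < A"
    by (simp add: A_def)
  have Re_z: "Re z = \<gamma> * (1 - \<rho>\<^sup>2) / A\<^sup>2"
    using Re_disc_to_rhp[OF w1] norm_w by (simp add: z_def A_def)
  have norm_z_p: "cmod (z - p) = 2 * \<gamma> * (1 - \<rho>) / (A * B)"
    unfolding z_def p_def A_def B_def by (rule norm_disc_to_rhp_radial_diff[OF \<gamma> w0 \<rho>_pos \<rho>(2)])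
  \<comment> \<open>\<open>cmod (z - p)\<close> and \<open>Re z\<close> share the factor \<open>\<gamma> (1 - \<rho>)\<close>, so the cone condition reduces to \<open>A < (1 + \<rho>) B\<close>.\<close>
  have "A \<le> B + cmod (w0 - \<rho> * w0)"
    using norm_triangle_ineq[of "1 - w0" "w0 - \<rho> * w0"] by (simp add: A_def B_def)
  hence A_less: "A < (1 + \<rho>) * B"
    using \<rho>B norm_minus_radial[OF w0(1), of \<rho>] \<rho> by (simp add: algebra_simps)
  have "cmod (z - p) = 2 * \<gamma> * (1 - \<rho>) * A / (A\<^sup>2 * B)"
    unfolding norm_z_p using A B by (simp add: power2_eq_square)
  also have "\<dots> < 2 * \<gamma> * (1 - \<rho>) * ((1 + \<rho>) * B) / (A\<^sup>2 * B)"
    using A_less A B \<gamma> \<rho> by (intro divide_strict_right_mono mult_strict_left_mono) auto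
  also have "\<dots> = 2 * Re z"
    unfolding Re_z using A B by (simp add: power2_eq_square field_simps)
  finally have "cmod (z - p) < 2 * Re z" .
  moreover have "\<bar>Im z - Im p\<bar> \<le> cmod (z - p)"
    by (metis abs_Im_le_cmod minus_complex.sel(2))
  ultimately show "\<bar>Im z - Im p\<bar> < 2 * Re z"
    by linarith
  show "0 < Re z"
    using Re_disc_to_rhp_pos[OF \<gamma>] norm_w \<rho> by (simp add: z_def)
  show "z \<noteq> p"
    using norm_z_p \<gamma> \<rho> A B by auto
qed

lemma disc_to_rhp_radial_tendsto_within_cone:
  fixes r :: "nat \<Rightarrow> real" and w0 :: complex
  assumes \<gamma>: "0 < \<gamma>" and w0: "cmod w0 = 1" "w0 \<noteq> 1"
    and r: "\<And>n. r n < 1" "r \<longlonglongrightarrow> 1"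
  shows "filterlim (\<lambda>n. disc_to_rhp \<gamma> t0 (r n * w0))
           (at (disc_to_rhp \<gamma> t0 w0) within
              {z. 0 < Re z \<and> \<bar>Im z - Im (disc_to_rhp \<gamma> t0 w0)\<bar> < 2 * Re z})
           sequentially"
proof (rule filterlim_at_withinI)
  have "(\<lambda>n. r n * w0) \<longlonglongrightarrow> w0"
    using tendsto_mult[OF tendsto_of_real[OF r(2)] tendsto_const[of w0]] by simp
  thus "(\<lambda>n. disc_to_rhp \<gamma> t0 (r n * w0)) \<longlonglongrightarrow> disc_to_rhp \<gamma> t0 w0"
    unfolding disc_to_rhp_def using w0(2) by (intro tendsto_intros) auto
  define B where "B = cmod (1 - w0)"
  have "0 < B"
    using w0(2) by (simp add: B_def)
  hence "1 / (1 + B) < 1"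
    by simp
  hence "eventually (\<lambda>n. 1 / (1 + cmod (1 - w0)) < r n) sequentially"
    unfolding B_def by (rule order_tendstoD(1)[OF r(2)])
  thus "eventually (\<lambda>n. disc_to_rhp \<gamma> t0 (r n * w0) \<in>
      {z. 0 < Re z \<and> \<bar>Im z - Im (disc_to_rhp \<gamma> t0 w0)\<bar> < 2 * Re z} - {disc_to_rhp \<gamma> t0 w0})
      sequentially"
    by eventually_elim (use disc_to_rhp_radial_in_cone[OF \<gamma> w0] r(1) in auto)
qed

lemma radial_limit_of_nontangential_limit:
  fixes f :: "complex \<Rightarrow> complex" and r :: "nat \<Rightarrow> real"
  assumes \<gamma>: "0 < \<gamma>" and r: "\<And>n. r n < 1" "r \<longlonglongrightarrow> 1"
    and lim: "nontangential_limit f t L"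
  shows "(\<lambda>n. f (disc_to_rhp \<gamma> t0 (circlepath 0 (r n) (boundary_angle \<gamma> (t0 - t))))) \<longlonglongrightarrow> L"
proof -
  define w0 where "w0 = circlepath 0 1 (boundary_angle \<gamma> (t0 - t))"
  have "disc_to_rhp \<gamma> t0 w0 = \<i> * (t0 - (t0 - t))"
    unfolding w0_def by (rule disc_to_rhp_boundary_angle(2)[OF \<gamma>])
  moreover have "w0 \<noteq> 1"
    unfolding w0_def by (rule disc_to_rhp_boundary_angle(1)[OF \<gamma>])
  ultimately have w0: "cmod w0 = 1" "w0 \<noteq> 1" "disc_to_rhp \<gamma> t0 w0 = \<i> * t"
    by (simp_all add: w0_def)
  have scale: "circlepath 0 (r n) x = r n * circlepath 0 1 x" for n x
    by (simp add: circlepath)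
  have radial: "filterlim (\<lambda>n. disc_to_rhp \<gamma> t0 (r n * w0))
      (at (\<i> * t) within {z. 0 < Re z \<and> \<bar>Im z - t\<bar> < 2 * Re z}) sequentially"
    using disc_to_rhp_radial_tendsto_within_cone[OF \<gamma> w0(1,2) r, of t0] w0(3) by simp
  have "(f \<longlongrightarrow> L) (at (\<i> * t) within {z. 0 < Re z \<and> \<bar>Im z - t\<bar> < 2 * Re z})"
    using lim by (simp add: nontangential_limit_def)
  from filterlim_compose[OF this radial] show ?thesis
    by (simp add: scale w0_def)
qed

lemma zorder_disc_to_rhp_diff:
  assumes \<gamma>: "0 < \<gamma>" and b: "b \<noteq> 1"
  shows "zorder (\<lambda>w. disc_to_rhp \<gamma> t0 w - disc_to_rhp \<gamma> t0 b) b = 1"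
proof -
  define d where "d = cmod (1 - b)"
  have d: "0 < d" and ball_d: "ball b d \<subseteq> - {1}"
    using b by (auto simp: d_def dist_norm norm_minus_commute)
  show ?thesis
  proof (rule zorder_eqI[OF open_ball centre_in_ball[THEN iffD2, OF d]])
    show "(\<lambda>w. 2 * complex_of_real \<gamma> / ((1 - w) * (1 - b))) holomorphic_on ball b d"
      using ball_d by (intro holomorphic_intros) auto
    fix w assume "w \<in> ball b d" "w \<noteq> b"
    thus "disc_to_rhp \<gamma> t0 w - disc_to_rhp \<gamma> t0 b
        = 2 * complex_of_real \<gamma> / ((1 - w) * (1 - b)) * (w - b) powi 1"
      using disc_to_rhp_diff[of w b \<gamma> t0] ball_d b by auto
  qed (use \<gamma> b in auto)
qed

lemma eventually_disc_to_rhp_neq: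
  assumes \<gamma>: "0 < \<gamma>" and b: "b \<noteq> 1"
  shows "eventually (\<lambda>w. disc_to_rhp \<gamma> t0 w \<noteq> disc_to_rhp \<gamma> t0 b) (at b)"
proof -
  have "eventually (\<lambda>w. w \<in> - {1} - {b}) (at b)"
    using b by (intro eventually_at_in_open) auto
  thus ?thesis
  proof eventually_elim
    case (elim w)
    hence "disc_to_rhp \<gamma> t0 w - disc_to_rhp \<gamma> t0 b \<noteq> 0"
      using \<gamma> b by (simp add: disc_to_rhp_diff)
    thus ?case
      by simp
  qed
qed

lemma zorder_comp_disc_to_rhp:
  fixes f :: "complex \<Rightarrow> complex"
  assumes \<gamma>: "0 < \<gamma>" and holo: "f holomorphic_on rhp" and a: "0 < Re a"
    and nz: "\<exists>s\<in>rhp. f s \<noteq> 0"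
  shows "zorder (f \<circ> disc_to_rhp \<gamma> t0) (rhp_to_disc \<gamma> t0 a) = zorder f a"
proof -
  define b where "b = rhp_to_disc \<gamma> t0 a"
  have b1: "b \<noteq> 1" and psi_b: "disc_to_rhp \<gamma> t0 b = a"
    using rhp_to_disc_ne_1[OF \<gamma> a] disc_to_rhp_rhp_to_disc[OF \<gamma> a] by (simp_all add: b_def)
  have rhp: "open rhp" "connected rhp" "a \<in> rhp"
    using a by (auto simp: rhp_def open_halfspace_Re_gt intro!: convex_connected convex_halfspace_Re_gt)
  have f_an: "f analytic_on {a}"
    using holo rhp by (simp add: analytic_at) blast
  have "zorder (f \<circ> disc_to_rhp \<gamma> t0) b
      = zorder f (disc_to_rhp \<gamma> t0 b) * zorder (\<lambda>w. disc_to_rhp \<gamma> t0 w - disc_to_rhp \<gamma> t0 b) b"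
  proof (rule zorder_compose')
    show "isolated_singularity_at f (disc_to_rhp \<gamma> t0 b)" "not_essential f (disc_to_rhp \<gamma> t0 b)"
      using f_an psi_b by (simp_all add: isolated_singularity_at_analytic not_essential_analytic)
    show "disc_to_rhp \<gamma> t0 analytic_on {b}"
      using holomorphic_on_disc_to_rhp b1 by (simp add: analytic_at) (meson open_Compl closed_singleton ComplI singletonD)
    obtain s where "s \<in> rhp" "f s \<noteq> 0"
      using nz by blast
    thus "eventually (\<lambda>w. f w \<noteq> 0) (at (disc_to_rhp \<gamma> t0 b))"
      unfolding psi_b by (rule eventually_mono[OF non_zero_neighbour_alt[OF holo rhp]]) blast
    show "eventually (\<lambda>w. disc_to_rhp \<gamma> t0 w \<noteq> disc_to_rhp \<gamma> t0 b) (at b)"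
      by (rule eventually_disc_to_rhp_neq[OF \<gamma> b1])
  qed
  moreover have "zorder (\<lambda>w. disc_to_rhp \<gamma> t0 w - disc_to_rhp \<gamma> t0 b) b = 1"
    by (rule zorder_disc_to_rhp_diff[OF \<gamma> b1])
  ultimately show ?thesis
    using psi_b by (simp add: b_def)
qed

lemma ln_inverse_ge_one_minus_square_half:
  fixes \<rho> :: real
  assumes "0 < \<rho>"
  shows "(1 - \<rho>\<^sup>2) / 2 \<le> ln (1 / \<rho>)"
proof -
  have "2 * ln \<rho> = ln (\<rho>\<^sup>2)"
    by (simp add: ln_realpow)
  also have "\<dots> \<le> \<rho>\<^sup>2 - 1"
    using assms by (intro ln_le_minus_one) simp
  finally show ?thesis
    using assms by (simp add: ln_div)
qed

lemma Re_le_ln_inverse_norm_rhp_to_disc: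
  assumes \<gamma>: "0 < \<gamma>" and a: "0 < Re a" "Re a < \<gamma>" and t: "\<bar>Im a - t0\<bar> \<le> 1/2"
  shows "Re a \<le> (4 * \<gamma>\<^sup>2 + 1) / (2 * \<gamma>) * ln (1 / cmod (rhp_to_disc \<gamma> t0 a))"
proof -
  define x where "x = Re a"
  define d where "d = Im a - t0"
  define A where "A = (x + \<gamma>)\<^sup>2 + d\<^sup>2"
  have x: "0 < x" "x < \<gamma>"
    using a by (simp_all add: x_def)
  have A: "0 < A"
    using x \<gamma> by (simp add: A_def add_pos_nonneg)
  have "(cmod (rhp_to_disc \<gamma> t0 a))\<^sup>2 = ((x - \<gamma>)\<^sup>2 + d\<^sup>2) / A"
    unfolding rhp_to_disc_def norm_divide power_divide cmod_power2
    by (simp add: A_def x_def d_def power2_eq_square algebra_simps)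
  hence norm_sq: "1 - (cmod (rhp_to_disc \<gamma> t0 a))\<^sup>2 = 4 * x * \<gamma> / A"
    using A by (simp add: A_def field_simps power2_eq_square)
  have "a - Complex \<gamma> t0 \<noteq> 0" "a + Complex \<gamma> (- t0) \<noteq> 0"
    using x \<gamma> by (auto simp: x_def complex_eq_iff)
  hence "rhp_to_disc \<gamma> t0 a \<noteq> 0"
    by (simp add: rhp_to_disc_def)
  hence "2 * x * \<gamma> / A \<le> ln (1 / cmod (rhp_to_disc \<gamma> t0 a))"
    using ln_inverse_ge_one_minus_square_half[of "cmod (rhp_to_disc \<gamma> t0 a)"] norm_sq
    by (simp add: mult_ac)
  moreover have "A \<le> 4 * \<gamma>\<^sup>2 + 1"
  proof -
    have "(x + \<gamma>)\<^sup>2 \<le> (2 * \<gamma>)\<^sup>2"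
      using x \<gamma> by (intro power_mono) auto
    moreover have "d\<^sup>2 \<le> (1/2)\<^sup>2"
      using t by (simp add: d_def abs_le_square_iff[symmetric])
    ultimately show ?thesis
      by (simp add: A_def power2_eq_square)
  qed
  hence "2 * x * \<gamma> / (4 * \<gamma>\<^sup>2 + 1) \<le> 2 * x * \<gamma> / A"
    using A x \<gamma> by (intro divide_left_mono) auto
  ultimately have "2 * x * \<gamma> / (4 * \<gamma>\<^sup>2 + 1) \<le> ln (1 / cmod (rhp_to_disc \<gamma> t0 a))"
    by linarith
  moreover have "0 < 4 * \<gamma>\<^sup>2 + 1"
    by (simp add: add_nonneg_pos)
  ultimately show ?thesis
    using \<gamma> by (simp add: x_def field_simps)
qed

section \<open>Bounds in the right half-plane\<close>

lemma boundary_angle_derivative_scaled_ge_1: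
  assumes \<gamma>: "0 < \<gamma>" and u: "\<bar>u\<bar> \<le> 1/2"
  shows "1 \<le> pi * (4 * \<gamma>\<^sup>2 + 1) / (4 * \<gamma>) * (\<gamma> / (pi * (\<gamma>\<^sup>2 + u\<^sup>2)))"
proof -
  have "pi * (4 * \<gamma>\<^sup>2 + 1) / (4 * \<gamma>) * (\<gamma> / (pi * (\<gamma>\<^sup>2 + u\<^sup>2)))
      = ((4 * \<gamma>\<^sup>2 + 1) * (pi * \<gamma>)) / ((4 * (\<gamma>\<^sup>2 + u\<^sup>2)) * (pi * \<gamma>))"
    by (simp add: mult_ac)
  also have "\<dots> = (4 * \<gamma>\<^sup>2 + 1) / (4 * (\<gamma>\<^sup>2 + u\<^sup>2))"
    using \<gamma> by simp
  moreover have "u\<^sup>2 \<le> (1/2)\<^sup>2"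
    using u by (simp add: abs_le_square_iff[symmetric])
  ultimately show ?thesis
    using \<gamma> by (simp add: field_simps add_pos_nonneg power2_eq_square)
qed

lemma nn_integral_comp_boundary_angle_le:
  fixes H :: "real \<Rightarrow> ennreal"
  assumes \<gamma>: "0 < \<gamma>" and H [measurable]: "H \<in> borel_measurable borel"
  shows "(\<integral>\<^sup>+t\<in>{\<tau>..\<tau>+1}. H (boundary_angle \<gamma> (\<tau> + 1/2 - t)) \<partial>lborel)
           \<le> ennreal (pi * (4 * \<gamma>\<^sup>2 + 1) / (4 * \<gamma>)) * (\<integral>\<^sup>+x\<in>{0..1}. H x \<partial>lborel)"
proof -
  define K where "K = pi * (4 * \<gamma>\<^sup>2 + 1) / (4 * \<gamma>)"
  define q where "q u = \<gamma> / (pi * (\<gamma>\<^sup>2 + u\<^sup>2))" for u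
  have q_nonneg: "0 \<le> q u" for u
    using \<gamma> by (simp add: q_def add_pos_nonneg less_imp_le)
  have K_nonneg: "0 \<le> K"
    using \<gamma> by (simp add: K_def)
  have Kq: "1 \<le> K * q u" if "\<bar>u\<bar> \<le> 1/2" for u
    unfolding K_def q_def by (rule boundary_angle_derivative_scaled_ge_1[OF \<gamma> that])
  have [measurable]: "boundary_angle \<gamma> \<in> borel_measurable borel"
    by (rule borel_measurable_continuous_onI[OF continuous_on_boundary_angle])
  have "(\<integral>\<^sup>+t\<in>{\<tau>..\<tau>+1}. H (boundary_angle \<gamma> (\<tau> + 1/2 - t)) \<partial>lborel)
      = (\<integral>\<^sup>+u\<in>{-1/2..1/2}. H (boundary_angle \<gamma> u) \<partial>lborel)"
    by (subst nn_integral_real_affine[where c = "-1" and t = "\<tau> + 1/2"])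
       (auto intro!: nn_integral_cong simp: indicator_def)
  also have "\<dots> \<le> (\<integral>\<^sup>+u\<in>{-1/2..1/2}. ennreal K * (H (boundary_angle \<gamma> u) * ennreal (q u)) \<partial>lborel)"
  proof (intro nn_integral_mono)
    fix u
    have "H (boundary_angle \<gamma> u) \<le> ennreal K * (H (boundary_angle \<gamma> u) * ennreal (q u))"
      if "\<bar>u\<bar> \<le> 1/2"
      using mult_right_mono[OF ennreal_leI[OF Kq[OF that]], of "H (boundary_angle \<gamma> u)"] q_nonneg K_nonneg
      by (simp add: ennreal_mult mult_ac)
    thus "H (boundary_angle \<gamma> u) * indicator {-1/2..1/2} u
        \<le> ennreal K * (H (boundary_angle \<gamma> u) * ennreal (q u)) * indicator {-1/2..1/2} u"
      by (auto simp: indicator_def abs_le_iff)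
  qed
  also have "\<dots> = ennreal K * (\<integral>\<^sup>+u. H (boundary_angle \<gamma> u) * ennreal (q u) * indicator {-1/2..1/2} u \<partial>lborel)"
    by (subst nn_integral_cmult[symmetric]) (auto simp: q_def mult_ac)
  also have "(\<integral>\<^sup>+u. H (boundary_angle \<gamma> u) * ennreal (q u) * indicator {-1/2..1/2} u \<partial>lborel)
      = (\<integral>\<^sup>+x\<in>{boundary_angle \<gamma> (-1/2)..boundary_angle \<gamma> (1/2)}. H x \<partial>lborel)"
    using has_real_derivative_boundary_angle[OF \<gamma>] q_nonneg \<gamma>
    by (intro nn_integral_substitution_aux[symmetric]) (auto simp: q_def intro!: continuous_intros add_pos_nonneg)
  also have "\<dots> \<le> (\<integral>\<^sup>+x\<in>{0..1}. H x \<partial>lborel)"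
    using boundary_angle_bounds[of \<gamma> "-1/2"] boundary_angle_bounds[of \<gamma> "1/2"]
    by (intro nn_integral_mono) (auto simp: indicator_def)
  finally show ?thesis
    by (simp add: K_def mult_left_mono)
qed

lemma norm_le_sup_norm_rhp:
  assumes "bounded (f ` rhp)" "s \<in> rhp"
  shows "cmod (f s) \<le> sup_norm_rhp f"
  unfolding sup_norm_rhp_def
  using assms by (intro cSUP_upper) (auto simp: bounded_iff bdd_above_def)

lemma holomorphic_bounded_comp_disc_to_rhp:
  fixes f :: "complex \<Rightarrow> complex"
  assumes holo: "f holomorphic_on rhp" and bound: "\<And>s. s \<in> rhp \<Longrightarrow> cmod (f s) \<le> M"
    and \<gamma>: "0 < \<gamma>"
  shows "(f \<circ> disc_to_rhp \<gamma> t0) holomorphic_on ball 0 1"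
    and "\<And>w. cmod w < 1 \<Longrightarrow> cmod ((f \<circ> disc_to_rhp \<gamma> t0) w) \<le> M"
    and "(f \<circ> disc_to_rhp \<gamma> t0) 0 = f (Complex \<gamma> t0)"
proof -
  have "disc_to_rhp \<gamma> t0 ` ball 0 1 \<subseteq> rhp"
    using Re_disc_to_rhp_pos[OF \<gamma>] by (auto simp: rhp_def)
  thus "(f \<circ> disc_to_rhp \<gamma> t0) holomorphic_on ball 0 1"
    by (intro holomorphic_on_compose holomorphic_on_subset[OF holomorphic_on_disc_to_rhp]
        holomorphic_on_subset[OF holo]) auto
  show "\<And>w. cmod w < 1 \<Longrightarrow> cmod ((f \<circ> disc_to_rhp \<gamma> t0) w) \<le> M"
    using bound Re_disc_to_rhp_pos[OF \<gamma>] by (simp add: rhp_def)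
qed simp

lemma zero_sum_Re_le:
  fixes f :: "complex \<Rightarrow> complex"
  assumes holo: "f holomorphic_on rhp" and bound: "\<And>s. s \<in> rhp \<Longrightarrow> cmod (f s) \<le> M"
    and \<gamma>: "0 < \<gamma>" and c: "0 < c" "c \<le> cmod (f (Complex \<gamma> t0))"
    and F: "finite F" "\<And>a. a \<in> F \<Longrightarrow> f a = 0 \<and> 0 < Re a \<and> Re a < \<gamma> \<and> \<bar>Im a - t0\<bar> \<le> 1/2"
  shows "(\<Sum>a\<in>F. real (zero_mult f a) * Re a) \<le> (4 * \<gamma>\<^sup>2 + 1) / (2 * \<gamma>) * ln (M / c)"
proof -
  define G where "G = f \<circ> disc_to_rhp \<gamma> t0"
  define \<phi> where "\<phi> = rhp_to_disc \<gamma> t0"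
  define K where "K = (4 * \<gamma>\<^sup>2 + 1) / (2 * \<gamma>)"
  have G: "G holomorphic_on ball 0 1" "\<And>w. cmod w < 1 \<Longrightarrow> cmod (G w) \<le> M"
    "G 0 = f (Complex \<gamma> t0)"
    unfolding G_def using holomorphic_bounded_comp_disc_to_rhp[OF holo bound \<gamma>] by blast+
  have G0: "G 0 \<noteq> 0" and M_c: "c \<le> M" "ln c \<le> ln (cmod (G 0))"
    using c G(2)[of 0] G(3) by (auto intro: ln_mono)
  have \<phi>_inverse: "disc_to_rhp \<gamma> t0 (\<phi> a) = a" if "a \<in> F" for a
    using disc_to_rhp_rhp_to_disc[OF \<gamma>] F(2)[OF that] by (simp add: \<phi>_def)
  hence "inj_on \<phi> F"
    by (metis inj_onI)
  have zeros: "\<phi> ` F \<subseteq> {w \<in> ball 0 1. G w = 0}"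
    using F(2) \<phi>_inverse norm_rhp_to_disc_less_1[OF \<gamma>] by (auto simp: G_def \<phi>_def)
  have "\<exists>s\<in>rhp. f s \<noteq> 0"
    using G0 G(3) \<gamma> by (intro bexI[of _ "Complex \<gamma> t0"]) (auto simp: rhp_def)
  hence mult: "zero_mult G (\<phi> a) = zero_mult f a" if "a \<in> F" for a
    using zorder_comp_disc_to_rhp[OF \<gamma> holo] F(2)[OF that] by (simp add: zero_mult_def G_def \<phi>_def)
  have "(\<Sum>a\<in>F. real (zero_mult f a) * Re a) \<le> (\<Sum>a\<in>F. real (zero_mult f a) * (K * ln (1 / cmod (\<phi> a))))"
    using F(2) Re_le_ln_inverse_norm_rhp_to_disc[OF \<gamma>]
    by (intro sum_mono mult_left_mono) (auto simp: K_def \<phi>_def)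
  also have "\<dots> = K * (\<Sum>b\<in>\<phi> ` F. real (zero_mult G b) * ln (1 / cmod b))"
    by (simp add: sum.reindex[OF \<open>inj_on \<phi> F\<close>] sum_distrib_left mult mult_ac)
  also have "\<dots> \<le> K * (ln M - ln (cmod (G 0)))"
    using zero_sum_ln_inverse_norm_le[OF G(1) G0 G(2) finite_imageI[OF F(1)] zeros] \<gamma>
    by (intro mult_left_mono) (auto simp: K_def)
  also have "\<dots> \<le> K * ln (M / c)"
    using M_c c \<gamma> by (intro mult_left_mono) (auto simp: K_def ln_div)
  finally show ?thesis
    by (simp add: K_def)
qed

lemma nn_integral_unit_interval_const_add:
  fixes h :: "real \<Rightarrow> ennreal"
  assumes [measurable]: "h \<in> borel_measurable borel"
  shows "(\<integral>\<^sup>+t\<in>{\<tau>..\<tau>+1}. ennreal a + h t \<partial>lborel) = ennreal a + (\<integral>\<^sup>+t\<in>{\<tau>..\<tau>+1}. h t \<partial>lborel)"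
  by (simp add: distrib_right nn_integral_add nn_integral_cmult_indicator)

lemma boundary_ln_integral_le:
  fixes f :: "complex \<Rightarrow> complex" and g :: "real \<Rightarrow> complex"
  assumes holo: "f holomorphic_on rhp" and bound: "\<And>s. s \<in> rhp \<Longrightarrow> cmod (f s) \<le> M"
    and \<gamma>: "0 < \<gamma>" and c: "0 < c" "c \<le> cmod (f (Complex \<gamma> (\<tau> + 1/2)))"
    and bv: "AE t in lborel. nontangential_limit f t (g t)"
  shows "(\<integral>\<^sup>+t\<in>{\<tau>..\<tau>+1}. ennreal \<bar>ln (cmod (g t))\<bar> \<partial>lborel)
           \<le> ennreal (\<bar>ln M\<bar> + pi / 2 * ((4 * \<gamma>\<^sup>2 + 1) / (2 * \<gamma>)) * ln (M / c))"
proof -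
  define t0 where "t0 = \<tau> + 1/2"
  define G where "G = f \<circ> disc_to_rhp \<gamma> t0"
  define K where "K = pi * (4 * \<gamma>\<^sup>2 + 1) / (4 * \<gamma>)"
  have G: "G holomorphic_on ball 0 1" "\<And>w. cmod w < 1 \<Longrightarrow> cmod (G w) \<le> M"
    "G 0 = f (Complex \<gamma> t0)"
    unfolding G_def using holomorphic_bounded_comp_disc_to_rhp[OF holo bound \<gamma>] by blast+
  have G0: "G 0 \<noteq> 0" and M_c: "c \<le> M" "ln c \<le> ln (cmod (G 0))"
    using c G(2)[of 0] G(3) by (auto simp: t0_def intro: ln_mono)
  obtain r where r: "\<And>n. 0 < r n" "\<And>n. r n < 1" "\<And>n w. cmod w = r n \<Longrightarrow> G w \<noteq> 0" "r \<longlonglongrightarrow> 1"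
    using radii_without_zeros_tendsto_1[OF G(1) G0] by blast
  define H where "H x = liminf (\<lambda>n. ennreal (ln M - ln (cmod (G (circlepath 0 (r n) x)))))" for x
  have "(\<lambda>x. ln (cmod (G (circlepath 0 (r n) x)))) \<in> borel_measurable borel" for n
    by (rule borel_measurable_ln_norm_circlepath[OF G(1) r(1,2)]) (use r(3) in blast)
  hence H_measurable [measurable]: "H \<in> borel_measurable borel"
    unfolding H_def by measurable
  have "AE t in lborel. ennreal \<bar>ln (cmod (g t))\<bar> \<le> ennreal \<bar>ln M\<bar> + H (boundary_angle \<gamma> (t0 - t))"
  proof (rule eventually_mono[OF bv])
    fix t assume "nontangential_limit f t (g t)"
    hence "(\<lambda>n. G (circlepath 0 (r n) (boundary_angle \<gamma> (t0 - t)))) \<longlonglongrightarrow> g t"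
      unfolding G_def comp_def by (rule radial_limit_of_nontangential_limit[OF \<gamma> r(2,4)])
    thus "ennreal \<bar>ln (cmod (g t))\<bar> \<le> ennreal \<bar>ln M\<bar> + H (boundary_angle \<gamma> (t0 - t))"
      unfolding H_def using G(2) r(1,2) by (intro abs_ln_norm_radial_limit_le) auto
  qed
  hence "(\<integral>\<^sup>+t\<in>{\<tau>..\<tau>+1}. ennreal \<bar>ln (cmod (g t))\<bar> \<partial>lborel)
      \<le> (\<integral>\<^sup>+t\<in>{\<tau>..\<tau>+1}. ennreal \<bar>ln M\<bar> + H (boundary_angle \<gamma> (t0 - t)) \<partial>lborel)"
    by (rule nn_integral_mono_AE[OF eventually_mono]) (auto simp: indicator_def)
  also have "\<dots> = ennreal \<bar>ln M\<bar> + (\<integral>\<^sup>+t\<in>{\<tau>..\<tau>+1}. H (boundary_angle \<gamma> (t0 - t)) \<partial>lborel)"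
  proof (rule nn_integral_unit_interval_const_add)
    have [measurable]: "boundary_angle \<gamma> \<in> borel_measurable borel"
      by (rule borel_measurable_continuous_onI[OF continuous_on_boundary_angle])
    show "(\<lambda>t. H (boundary_angle \<gamma> (t0 - t))) \<in> borel_measurable borel"
      by measurable
  qed
  also have "\<dots> \<le> ennreal \<bar>ln M\<bar> + ennreal K * (\<integral>\<^sup>+x\<in>{0..1}. H x \<partial>lborel)"
    unfolding t0_def K_def by (intro add_left_mono nn_integral_comp_boundary_angle_le[OF \<gamma> H_measurable])
  also have "\<dots> \<le> ennreal \<bar>ln M\<bar> + ennreal K * ennreal (ln M - ln (cmod (G 0)))"
    unfolding H_def
    by (intro add_left_mono mult_left_mono nn_integral_liminf_circle_le[OF G(1) G0 G(2) r(1-3)] zero_le)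
  also have "\<dots> \<le> ennreal \<bar>ln M\<bar> + ennreal K * ennreal (ln (M / c))"
    using M_c c by (intro add_left_mono mult_left_mono ennreal_leI) (simp_all add: ln_div)
  also have "\<dots> = ennreal (\<bar>ln M\<bar> + pi / 2 * ((4 * \<gamma>\<^sup>2 + 1) / (2 * \<gamma>)) * ln (M / c))"
    using M_c c \<gamma> by (simp add: K_def ennreal_mult[symmetric] ennreal_plus[symmetric] field_simps
                          del: ennreal_plus)
  finally show ?thesis .
qed

theorem theorem3p6:
  fixes f :: "complex \<Rightarrow> complex" and \<gamma> c :: real and g :: "real \<Rightarrow> complex"
  assumes holo: "f holomorphic_on rhp"
    and bdd: "bounded (f ` rhp)"
    and gamma_pos: "\<gamma> > 0" and c_pos: "c > 0"
    and lower: "\<And>\<tau>. cmod (f (Complex \<gamma> \<tau>)) \<ge> c"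
    and bv: "AE t in lborel. nontangential_limit f t (g t)"
  shows "\<forall>\<tau>::real.
      (let Z = {s. f s = 0 \<and> \<tau> \<le> Im s \<and> Im s \<le> \<tau> + 1 \<and> 0 < Re s \<and> Re s < \<gamma>} in
        (\<lambda>s. real (zero_mult f s) * Re s) summable_on Z \<and>
        (\<Sum>\<^sub>\<infinity>s\<in>Z. real (zero_mult f s) * Re s)
          \<le> (4 * \<gamma>\<^sup>2 + 1) / (2 * \<gamma>) * ln (sup_norm_rhp f / c))
    \<and> (\<integral>\<^sup>+ t\<in>{\<tau>..\<tau>+1}. ennreal \<bar>ln (cmod (g t))\<bar> \<partial>lborel)
        \<le> ennreal (\<bar>ln (sup_norm_rhp f)\<bar>
            + pi / 2 * ((4 * \<gamma>\<^sup>2 + 1) / (2 * \<gamma>)) * ln (sup_norm_rhp f / c))"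
proof (intro allI conjI)
  fix \<tau> :: real
  have bound: "\<And>s. s \<in> rhp \<Longrightarrow> cmod (f s) \<le> sup_norm_rhp f"
    by (rule norm_le_sup_norm_rhp[OF bdd])
  define Z where "Z = {s. f s = 0 \<and> \<tau> \<le> Im s \<and> Im s \<le> \<tau> + 1 \<and> 0 < Re s \<and> Re s < \<gamma>}"
  have finite_sums: "(\<Sum>s\<in>F. real (zero_mult f s) * Re s)
      \<le> (4 * \<gamma>\<^sup>2 + 1) / (2 * \<gamma>) * ln (sup_norm_rhp f / c)" if "finite F" "F \<subseteq> Z" for F
    using that by (intro zero_sum_Re_le[OF holo bound gamma_pos c_pos lower[of "\<tau> + 1/2"]])
                  (auto simp: Z_def subset_iff abs_if)
  have summable: "(\<lambda>s. real (zero_mult f s) * Re s) summable_on Z"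
    using finite_sums by (intro nonneg_bdd_above_summable_on bdd_aboveI2) (auto simp: Z_def)
  with infsum_le_finite_sums[OF summable finite_sums]
  show "let Z = {s. f s = 0 \<and> \<tau> \<le> Im s \<and> Im s \<le> \<tau> + 1 \<and> 0 < Re s \<and> Re s < \<gamma>} in
      (\<lambda>s. real (zero_mult f s) * Re s) summable_on Z \<and>
      (\<Sum>\<^sub>\<infinity>s\<in>Z. real (zero_mult f s) * Re s) \<le> (4 * \<gamma>\<^sup>2 + 1) / (2 * \<gamma>) * ln (sup_norm_rhp f / c)"
    by (simp add: Z_def)
  show "(\<integral>\<^sup>+ t\<in>{\<tau>..\<tau>+1}. ennreal \<bar>ln (cmod (g t))\<bar> \<partial>lborel)
      \<le> ennreal (\<bar>ln (sup_norm_rhp f)\<bar> + pi / 2 * ((4 * \<gamma>\<^sup>2 + 1) / (2 * \<gamma>)) * ln (sup_norm_rhp f / c))"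
    by (rule boundary_ln_integral_le[OF holo bound gamma_pos c_pos lower bv])
qed

end
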